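(* Consider a stochastic multi-armed bandit with $K\ge 2$ arms and horizon $n$. Arm $i$ has an unknown reward distribution $\nu_i$ supported on $[0,1]$, with variance $\sigma_i^2$; rewards are independent across arms and time. Assume the arm with maximal variance is unique, and let $\sigma_*^2=\max_i\sigma_i^2$ and $\delta_i=\sigma_*^2-\sigma_i^2$. Let $s_i(t)$ be the number of pulls of arm $i$ up to and including time $t$, and let $\bar V_i(t)=\frac{1}{s_i(t)}\sum_{q=1}^{s_i(t)}\big(X_{i,q}-\bar\mu_i(t)\big)^2$ be the (biased) empirical variance of the $s_i(t)$ rewards $X_{i,1},\dots,X_{i,s_i(t)}$ observed from arm $i$, where $\bar\mu_i(t)$ is their empirical mean. The algorithm UCB-VV first pulls the arms once each in round-robin order ($t=1,\dots,K$), and thereafter at each time $t$ pulls an arm maximizing the index $$B_i(t-1)=\bar V_i(t-1)+\sqrt{\frac{2\log (t-1)}{s_i(t-1)}}.$$ Define the regret $R_{\mathrm{VV}}(n)=\sum_{i=1}^K \mathbb{E}[s_i(n)]\,\delta_i$. Then $$R_{\mathrm{VV}}(n)\le 8\sum_{i:\sigma_i^2<\sigma_*^2}\frac{\log n}{\delta_i}+\Big(1+\frac{\pi^2}{3}\Big)\sum_{i:\sigma_i^2<\sigma_*^2}\delta_i .$$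
   Context: The regret counts, weighted by the variance gap $\delta_i$, the expected number of pulls of arms that do not have the maximal variance. *)

theory Defs
  imports "HOL-Probability.Probability"
begin

text \<open>Arms are 0,...,K-1. The reward table x i q is the (q+1)-th reward observed
from arm i (q = 0,1,...).\<close>

definition emp_mean :: "(nat \<Rightarrow> nat \<Rightarrow> real) \<Rightarrow> nat \<Rightarrow> nat \<Rightarrow> real" where
  "emp_mean x i m = (\<Sum>q<m. x i q) / real m"

definition emp_var :: "(nat \<Rightarrow> nat \<Rightarrow> real) \<Rightarrow> nat \<Rightarrow> nat \<Rightarrow> real" where
  "emp_var x i m = (\<Sum>q<m. (x i q - emp_mean x i m)^2) / real m"

text \<open>UCB-VV index of arm i at time t+1, computed from the counts c after t pulls:
  B_i(t) = V_i(t) + sqrt(2 log t / s_i(t)).\<close>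
definition vv_index :: "(nat \<Rightarrow> nat \<Rightarrow> real) \<Rightarrow> (nat \<Rightarrow> nat) \<Rightarrow> nat \<Rightarrow> nat \<Rightarrow> real" where
  "vv_index x c t i = emp_var x i (c i) + sqrt (2 * ln (real t) / real (c i))"

text \<open>The first K pulls are round robin
(time t+1 pulls arm t for t < K); afterwards the arm pulled at time t+1 is
tb (t+1) S where S is the set of arms maximising the index B_i(t), and tb is an
arbitrary tie-breaking rule (required to choose inside S).\<close>
fun vv_counts :: "nat \<Rightarrow> (nat \<Rightarrow> nat set \<Rightarrow> nat) \<Rightarrow> (nat \<Rightarrow> nat \<Rightarrow> real) \<Rightarrow> nat \<Rightarrow> nat \<Rightarrow> nat" where
  "vv_counts K tb x 0 = (\<lambda>i. 0)"
| "vv_counts K tb x (Suc t) =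
     (let c = vv_counts K tb x t;
          a = (if t < K then t
               else tb (Suc t) {i. i < K \<and> (\<forall>j<K. vv_index x c t j \<le> vv_index x c t i)})
      in c(a := c a + 1))"

definition dist_var :: "real measure \<Rightarrow> real" where
  "dist_var \<nu> = (\<integral>y. (y - (\<integral>z. z \<partial>\<nu>))^2 \<partial>\<nu>)"

end

(* UCB-VV is analysed like UCB1, with the empirical variance in place of the empirical mean.
   Once a suboptimal arm i has been pulled l >= 8 ln n / delta_i^2 times, the confidence radius
   r = sqrt (2 ln t / s) at its sample size is at most delta_i / 2, so a further pull at time t + 1
   forces, for some sample size s <= t, the empirical variance of arm i above sigma_i^2 + r or that
   of an optimal arm below sigma_*^2 - r.  Hoeffding's inequality for the squared deviations from
   the mean, and in the lower tail also for the mean itself, bounds the total probability of these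
   events over all t by 5/2.  Hence E s_i(n) <= 8 ln n / delta_i^2 + 7/2, and 7/2 <= 1 + pi^2/3. *)

theory Submission
  imports Defs
begin

section \<open>The index policy\<close>

definition vv_radius :: "nat \<Rightarrow> nat \<Rightarrow> real" where
  "vv_radius t s = sqrt (2 * ln (real t) / real s)"

lemma vv_index_eq: "vv_index x c t i = emp_var x i (c i) + vv_radius t (c i)"
  by (simp add: vv_index_def vv_radius_def)

lemma vv_radius_nonneg: "0 \<le> vv_radius t s"
  by (cases t) (simp_all add: vv_radius_def)

text \<open>The arm pulled at time \<open>t + 1\<close>.\<close>
definition vv_arm :: "nat \<Rightarrow> (nat \<Rightarrow> nat set \<Rightarrow> nat) \<Rightarrow> (nat \<Rightarrow> nat \<Rightarrow> real) \<Rightarrow> nat \<Rightarrow> nat" where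
  "vv_arm K tb x t = (if t < K then t
     else tb (Suc t) {i. i < K \<and> (\<forall>j<K. vv_index x (vv_counts K tb x t) t j \<le> vv_index x (vv_counts K tb x t) t i)})"

lemma vv_counts_Suc:
  "vv_counts K tb x (Suc t) i = vv_counts K tb x t i + of_bool (vv_arm K tb x t = i)"
  by (simp add: Let_def vv_arm_def)

declare vv_counts.simps(2) [simp del]

lemma vv_counts_le: "vv_counts K tb x t i \<le> t"
  by (induction t) (auto simp: vv_counts_Suc)

lemma vv_counts_mono: "t \<le> t' \<Longrightarrow> vv_counts K tb x t i \<le> vv_counts K tb x t' i"
  by (induction t' rule: dec_induct) (auto simp: vv_counts_Suc)

lemma vv_counts_initial: "t \<le> K \<Longrightarrow> vv_counts K tb x t i = of_bool (i < t)"
  by (induction t) (auto simp: vv_counts_Suc vv_arm_def)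

lemma vv_counts_pos: "K \<le> t \<Longrightarrow> i < K \<Longrightarrow> 0 < vv_counts K tb x t i"
  using vv_counts_mono[of K t K tb x i] by (simp add: vv_counts_initial)

lemma vv_arm_maximises_index:
  assumes tb: "\<And>t S. S \<noteq> {} \<Longrightarrow> tb t S \<in> S" and "0 < K" "K \<le> t"
  shows "vv_arm K tb x t < K"
    and "\<And>j. j < K \<Longrightarrow> vv_index x (vv_counts K tb x t) t j \<le> vv_index x (vv_counts K tb x t) t (vv_arm K tb x t)"
proof -
  let ?B = "vv_index x (vv_counts K tb x t) t"
  obtain i where "i < K" "?B i = Max (?B ` {..<K})"
    using Max_in[of "?B ` {..<K}"] \<open>0 < K\<close> by fastforce
  then have "{i. i < K \<and> (\<forall>j<K. ?B j \<le> ?B i)} \<noteq> {}" by fastforce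
  from tb[OF this] show "vv_arm K tb x t < K" "\<And>j. j < K \<Longrightarrow> ?B j \<le> ?B (vv_arm K tb x t)"
    using \<open>K \<le> t\<close> by (auto simp: vv_arm_def)
qed

lemma vv_counts_le_threshold:
  assumes "1 \<le> l"
  shows "vv_counts K tb x n i \<le> l + (\<Sum>t\<in>{K..<n}. of_bool (vv_arm K tb x t = i \<and> l \<le> vv_counts K tb x t i))"
proof (induction n)
  case (Suc n)
  show ?case
  proof (cases "n < K")
    case True
    then show ?thesis using assms by (simp add: vv_counts_initial)
  next
    case False
    then have "vv_counts K tb x (Suc n) i
        \<le> max l (vv_counts K tb x n i + of_bool (vv_arm K tb x n = i \<and> l \<le> vv_counts K tb x n i))"
      by (auto simp: vv_counts_Suc)
    then show ?thesis using Suc.IH False by (simp add: sum.atLeastLessThan_Suc)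
  qed
qed simp

lemma vv_radius_le_half_gap:
  assumes "0 < d" "1 \<le> t" "t \<le> n" "8 * ln (real n) / d^2 \<le> real s"
  shows "vv_radius t s \<le> d / 2"
proof -
  have "2 * ln (real t) \<le> 2 * ln (real n)" using assms(2,3) by simp
  also have "\<dots> \<le> real s * (d / 2)^2"
    using assms(1,4) by (simp add: pos_divide_le_eq power_divide)
  finally have "2 * ln (real t) / real s \<le> (d / 2)^2"
    by (cases "s = 0") (simp_all add: divide_le_eq mult.commute)
  then have "vv_radius t s \<le> sqrt ((d / 2)^2)"
    unfolding vv_radius_def by (rule real_sqrt_le_mono)
  then show ?thesis using assms(1) by simp
qed

lemma vv_pull_implies_deviation:
  fixes v :: "nat \<Rightarrow> real"
  assumes tb: "\<And>t S. S \<noteq> {} \<Longrightarrow> tb t S \<in> S" and "0 < K" "K \<le> t" "t \<le> n"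
    and pull: "vv_arm K tb x t = i" and "j < K" and gap: "v i < v j"
    and often: "8 * ln (real n) / (v j - v i)^2 \<le> vv_counts K tb x t i"
  shows "(\<exists>s\<in>{1..t}. v i + vv_radius t s \<le> emp_var x i s)
       \<or> (\<exists>s\<in>{1..t}. emp_var x j s + vv_radius t s \<le> v j)"
proof (rule ccontr)
  let ?c = "vv_counts K tb x t"
  assume no_deviation: "\<not> ?thesis"
  have "vv_arm K tb x t < K" by (rule vv_arm_maximises_index(1)[OF tb \<open>0 < K\<close> \<open>K \<le> t\<close>])
  with pull have "?c i \<in> {1..t}" "?c j \<in> {1..t}"
    using vv_counts_pos[OF \<open>K \<le> t\<close>] vv_counts_le \<open>j < K\<close> by (auto simp: Suc_le_eq)
  then have "emp_var x i (?c i) < v i + vv_radius t (?c i)"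
    and "v j < emp_var x j (?c j) + vv_radius t (?c j)"
    using no_deviation by (auto simp: not_le)
  moreover have "vv_index x ?c t j \<le> vv_index x ?c t (vv_arm K tb x t)"
    by (rule vv_arm_maximises_index(2)[OF tb \<open>0 < K\<close> \<open>K \<le> t\<close> \<open>j < K\<close>])
  moreover have "vv_radius t (?c i) \<le> (v j - v i) / 2"
    using vv_radius_le_half_gap[OF _ _ \<open>t \<le> n\<close> often] gap \<open>0 < K\<close> \<open>K \<le> t\<close> by simp
  ultimately show False using pull by (simp add: vv_index_eq)
qed

lemma vv_counts_le_deviations:
  fixes v :: "nat \<Rightarrow> real" and l :: nat
  assumes tb: "\<And>t S. S \<noteq> {} \<Longrightarrow> tb t S \<in> S" and "0 < K" "j < K" "v i < v j"
    and l: "1 \<le> l" "8 * ln (real n) / (v j - v i)^2 \<le> l"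
  shows "real (vv_counts K tb x n i) \<le> real l + (\<Sum>t\<in>{K..<n}. \<Sum>s\<in>{1..t}.
           of_bool (v i + vv_radius t s \<le> emp_var x i s) + of_bool (emp_var x j s + vv_radius t s \<le> v j))"
proof -
  let ?dev = "\<lambda>t s. of_bool (v i + vv_radius t s \<le> emp_var x i s)
    + (of_bool (emp_var x j s + vv_radius t s \<le> v j) :: real)"
  let ?P = "\<lambda>t. vv_arm K tb x t = i \<and> l \<le> vv_counts K tb x t i"
  have "vv_counts K tb x n i \<le> l + (\<Sum>t\<in>{K..<n}. of_bool (?P t))"
    by (rule vv_counts_le_threshold[OF l(1)])
  then have "real (vv_counts K tb x n i) \<le> real l + (\<Sum>t\<in>{K..<n}. of_bool (?P t))"
    by (simp add: of_nat_sum flip: of_nat_le_iff)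
  also have "\<dots> \<le> real l + (\<Sum>t\<in>{K..<n}. \<Sum>s\<in>{1..t}. ?dev t s)"
  proof (intro add_left_mono sum_mono)
    fix t assume t: "t \<in> {K..<n}"
    show "of_bool (?P t) \<le> (\<Sum>s\<in>{1..t}. ?dev t s)"
    proof (cases "?P t")
      case True
      then have "8 * ln (real n) / (v j - v i)^2 \<le> vv_counts K tb x t i"
        using l(2) by (meson of_nat_le_iff order_trans)
      with True t obtain s where s: "s \<in> {1..t}" "1 \<le> ?dev t s"
        using vv_pull_implies_deviation[where tb=tb, OF tb \<open>0 < K\<close> _ _ _ \<open>j < K\<close> \<open>v i < v j\<close>, of t n x]
        by fastforce
      have "?dev t s \<le> (\<Sum>s\<in>{1..t}. ?dev t s)"
        by (rule member_le_sum) (use s in auto)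
      with s True show ?thesis by simp
    next
      case False
      have "0 \<le> (\<Sum>s\<in>{1..t}. ?dev t s)" by (rule sum_nonneg) simp
      with False show ?thesis by (simp only: of_bool_eq(1))
    qed
  qed
  finally show ?thesis .
qed

section \<open>Concentration of the empirical variance\<close>

lemma emp_var_eq_shifted:
  assumes "0 < s"
  shows "emp_var x i s = (\<Sum>q<s. (x i q - m)^2) / real s - (emp_mean x i s - m)^2"
proof -
  let ?a = "emp_mean x i s"
  have sum_eq: "(\<Sum>q<s. x i q) = real s * ?a" using assms by (simp add: emp_mean_def)
  have "(\<Sum>q<s. (x i q - m)^2) = (\<Sum>q<s. (x i q - ?a)^2 + 2 * (?a - m) * x i q + (m^2 - ?a^2))"
    by (intro sum.cong) (auto simp: power2_eq_square algebra_simps)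
  also have "\<dots> = (\<Sum>q<s. (x i q - ?a)^2) + 2 * (?a - m) * (\<Sum>q<s. x i q) + real s * (m^2 - ?a^2)"
    by (simp add: sum.distrib sum_distrib_left)
  also have "\<dots> = (\<Sum>q<s. (x i q - ?a)^2) + real s * (?a - m)^2"
    by (simp add: sum_eq power2_eq_square algebra_simps)
  finally show ?thesis using assms by (simp add: emp_var_def field_simps)
qed

lemma emp_var_le_shifted: "0 < s \<Longrightarrow> emp_var x i s \<le> (\<Sum>q<s. (x i q - m)^2) / real s"
  using emp_var_eq_shifted[of s x i m] by simp

lemma emp_var_undershoot:
  assumes "0 < s" "emp_var x i s + (a + b) \<le> v"
  shows "(\<Sum>q<s. (x i q - m)^2) / real s \<le> v - a \<or> sqrt b \<le> \<bar>(\<Sum>q<s. x i q) / real s - m\<bar>"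
proof -
  let ?d = "(\<Sum>q<s. x i q) / real s - m"
  have "b \<le> ?d^2" if "\<not> (\<Sum>q<s. (x i q - m)^2) / real s \<le> v - a"
    using that assms emp_var_eq_shifted[OF assms(1), of x i m] by (simp add: emp_mean_def)
  then show ?thesis using real_sqrt_le_mono[of b "?d^2"] by auto
qed

lemma emp_var_nonneg: "0 \<le> emp_var x i s"
  unfolding emp_var_def by (intro divide_nonneg_nonneg sum_nonneg) auto

lemma (in prob_space) indep_sets_reindex:
  assumes f: "inj_on f I" and indep: "indep_sets F (f ` I)"
  shows "indep_sets (\<lambda>i. F (f i)) I"
  unfolding indep_sets_def
proof (intro conjI ballI allI impI)
  show "F (f i) \<subseteq> events" if "i \<in> I" for i
    using indep that unfolding indep_sets_def by blast
  fix J A assume J: "J \<subseteq> I" "J \<noteq> {}" "finite J" and A: "A \<in> Pi J (\<lambda>i. F (f i))"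
  define B where "B = (\<lambda>j. A (the_inv_into I f j))"
  have inj: "inj_on f J" using f J(1) by (rule inj_on_subset)
  have BA: "B (f j) = A j" if "j \<in> J" for j
    using that J(1) f by (simp add: B_def the_inv_into_f_f subset_iff)
  have "f ` J \<subseteq> f ` I" "f ` J \<noteq> {}" "finite (f ` J)" "B \<in> Pi (f ` J) F"
    using J A BA by auto
  with indep have "prob (\<Inter>j\<in>f ` J. B j) = (\<Prod>j\<in>f ` J. prob (B j))"
    unfolding indep_sets_def by presburger
  moreover have "(\<Inter>j\<in>f ` J. B j) = (\<Inter>j\<in>J. A j)" using BA by auto
  moreover have "(\<Prod>j\<in>f ` J. prob (B j)) = (\<Prod>j\<in>J. prob (A j))"
    by (rule prod.reindex_cong[OF inj refl]) (simp add: BA)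
  ultimately show "prob (\<Inter>j\<in>J. A j) = (\<Prod>j\<in>J. prob (A j))" by simp
qed

lemma (in prob_space) indep_vars_reindex:
  assumes "inj_on f I" "indep_vars M' X (f ` I)"
  shows "indep_vars (\<lambda>i. M' (f i)) (\<lambda>i. X (f i)) I"
  using assms indep_sets_reindex[of f I "\<lambda>i. {X i -` A \<inter> space M | A. A \<in> sets (M' i)}"]
  unfolding indep_vars_def2 by auto

lemma (in prob_space) integrable_unit_interval:
  fixes X :: "'a \<Rightarrow> real"
  assumes "random_variable borel X" "AE \<omega> in M. X \<omega> \<in> {0..1}"
  shows "integrable M X"
proof (rule integrable_const_bound[where B=1])
  show "AE \<omega> in M. norm (X \<omega>) \<le> 1" using assms(2) by eventually_elim auto
qed (use assms(1) in simp)

lemma (in prob_space) expectation_unit_interval: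
  fixes X :: "'a \<Rightarrow> real"
  assumes "random_variable borel X" "AE \<omega> in M. X \<omega> \<in> {0..1}"
  shows "expectation X \<in> {0..1}"
proof -
  have "AE \<omega> in M. 0 \<le> X \<omega>" "AE \<omega> in M. X \<omega> \<le> 1" using assms(2) by (eventually_elim, simp)+
  then show ?thesis using integrable_unit_interval[OF assms] by (simp add: integral_ge_const integral_le_const)
qed

lemma (in prob_space) variance_le_quarter:
  fixes X :: "'a \<Rightarrow> real"
  assumes X: "random_variable borel X" "AE \<omega> in M. X \<omega> \<in> {0..1}"
  shows "variance X \<le> 1/4"
proof -
  have X2: "random_variable borel (\<lambda>\<omega>. (X \<omega>)^2)" "AE \<omega> in M. (X \<omega>)^2 \<in> {0..1}"
    using X(1) by simp (use X(2) in \<open>eventually_elim, simp add: power_le_one\<close>)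
  have "AE \<omega> in M. (X \<omega>)^2 \<le> X \<omega>"
    using X(2) by eventually_elim (simp add: power2_eq_square mult_left_le)
  then have "expectation (\<lambda>\<omega>. (X \<omega>)^2) \<le> expectation X"
    using integrable_unit_interval[OF X] integrable_unit_interval[OF X2] by (intro integral_mono_AE)
  then have "variance X \<le> expectation X - (expectation X)^2"
    using variance_eq[OF integrable_unit_interval[OF X] integrable_unit_interval[OF X2]] by simp
  also have "\<dots> \<le> 1/4"
    using zero_le_power2[of "expectation X - 1/2"] by (simp add: power2_eq_square algebra_simps)
  finally show ?thesis .
qed

lemma (in prob_space)
  fixes Y :: "nat \<Rightarrow> 'a \<Rightarrow> real"
  assumes indep: "indep_vars (\<lambda>_. borel) Y {..<s}" and "0 < s" "0 \<le> \<epsilon>"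
    and bounded: "\<And>q. q < s \<Longrightarrow> AE \<omega> in M. Y q \<omega> \<in> {0..1}"
    and mean: "\<And>q. q < s \<Longrightarrow> expectation (Y q) = m"
  shows Hoeffding_unit_interval_ge:
      "prob {\<omega>\<in>space M. m + \<epsilon> \<le> (\<Sum>q<s. Y q \<omega>) / s} \<le> exp (-2 * real s * \<epsilon>^2)"
    and Hoeffding_unit_interval_le:
      "prob {\<omega>\<in>space M. (\<Sum>q<s. Y q \<omega>) / s \<le> m - \<epsilon>} \<le> exp (-2 * real s * \<epsilon>^2)"
    and Hoeffding_unit_interval_abs_ge:
      "prob {\<omega>\<in>space M. \<epsilon> \<le> \<bar>(\<Sum>q<s. Y q \<omega>) / s - m\<bar>} \<le> 2 * exp (-2 * real s * \<epsilon>^2)"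
proof -
  interpret Hoeffding_ineq M "{..<s}" Y "\<lambda>_. 0" "\<lambda>_. 1" "real s * m"
  proof unfold_locales
    show "real s * m \<equiv> \<Sum>q<s. expectation (Y q)" using mean by simp
  qed (use indep bounded in auto)
  have pos: "(\<Sum>q<s. (1 - 0 :: real)^2) > 0" using \<open>0 < s\<close> by simp
  have s\<epsilon>: "0 \<le> real s * \<epsilon>" using \<open>0 \<le> \<epsilon>\<close> by simp
  have rate: "-2 * (real s * \<epsilon>)^2 / (\<Sum>q<s. (1 - 0 :: real)^2) = -2 * real s * \<epsilon>^2"
    using \<open>0 < s\<close> by (simp add: power2_eq_square)
  have "{\<omega>\<in>space M. m + \<epsilon> \<le> (\<Sum>q<s. Y q \<omega>) / s}
      = {\<omega>\<in>space M. (\<Sum>q<s. Y q \<omega>) \<ge> real s * m + real s * \<epsilon>}"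
    using \<open>0 < s\<close> by (auto simp: field_simps)
  then show "prob {\<omega>\<in>space M. m + \<epsilon> \<le> (\<Sum>q<s. Y q \<omega>) / s} \<le> exp (-2 * real s * \<epsilon>^2)"
    using Hoeffding_ineq_ge[OF s\<epsilon> pos] by (simp only: rate)
  have "{\<omega>\<in>space M. (\<Sum>q<s. Y q \<omega>) / s \<le> m - \<epsilon>}
      = {\<omega>\<in>space M. (\<Sum>q<s. Y q \<omega>) \<le> real s * m - real s * \<epsilon>}"
    using \<open>0 < s\<close> by (auto simp: field_simps)
  then show "prob {\<omega>\<in>space M. (\<Sum>q<s. Y q \<omega>) / s \<le> m - \<epsilon>} \<le> exp (-2 * real s * \<epsilon>^2)"
    using Hoeffding_ineq_le[OF s\<epsilon> pos] by (simp only: rate)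
  have "\<bar>S / s - m\<bar> = \<bar>S - s * m\<bar> / s" for S :: real
    using \<open>0 < s\<close> by (simp add: field_simps)
  then have "{\<omega>\<in>space M. \<epsilon> \<le> \<bar>(\<Sum>q<s. Y q \<omega>) / s - m\<bar>}
      = {\<omega>\<in>space M. \<bar>(\<Sum>q<s. Y q \<omega>) - real s * m\<bar> \<ge> real s * \<epsilon>}"
    using \<open>0 < s\<close> by (auto simp: field_simps)
  then show "prob {\<omega>\<in>space M. \<epsilon> \<le> \<bar>(\<Sum>q<s. Y q \<omega>) / s - m\<bar>} \<le> 2 * exp (-2 * real s * \<epsilon>^2)"
    using Hoeffding_ineq_abs_ge[OF s\<epsilon> pos] by (simp only: rate)
qed

lemma (in prob_space)
  fixes Z :: "nat \<Rightarrow> 'a \<Rightarrow> real"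
  assumes indep: "indep_vars (\<lambda>_. borel) Z {..<s}" and "0 < s" "0 \<le> \<epsilon>"
    and bounded: "\<And>q. q < s \<Longrightarrow> AE \<omega> in M. Z q \<omega> \<in> {0..1}"
    and mean: "\<And>q. q < s \<Longrightarrow> expectation (Z q) = \<mu>"
    and var: "\<And>q. q < s \<Longrightarrow> expectation (\<lambda>\<omega>. (Z q \<omega> - \<mu>)^2) = \<sigma>2"
  shows Hoeffding_squared_deviations_ge:
      "prob {\<omega>\<in>space M. \<sigma>2 + \<epsilon> \<le> (\<Sum>q<s. (Z q \<omega> - \<mu>)^2) / s} \<le> exp (-2 * real s * \<epsilon>^2)"
    and Hoeffding_squared_deviations_le:
      "prob {\<omega>\<in>space M. (\<Sum>q<s. (Z q \<omega> - \<mu>)^2) / s \<le> \<sigma>2 - \<epsilon>} \<le> exp (-2 * real s * \<epsilon>^2)"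
proof -
  have \<mu>: "\<mu> \<in> {0..1}"
    using expectation_unit_interval[of "Z 0"] indep bounded[of 0] mean[of 0] \<open>0 < s\<close>
    unfolding indep_vars_def by auto
  have "AE \<omega> in M. (Z q \<omega> - \<mu>)^2 \<in> {0..1}" if "q < s" for q
    using bounded[OF that] by eventually_elim (use \<mu> in \<open>auto simp: abs_square_le_1\<close>)
  moreover have "indep_vars (\<lambda>_. borel) (\<lambda>q \<omega>. (Z q \<omega> - \<mu>)^2) {..<s}"
    by (rule indep_vars_compose2[OF indep, where Y="\<lambda>_ z. (z - \<mu>)^2" and N="\<lambda>_. borel"]) simp
  ultimately show
      "prob {\<omega>\<in>space M. \<sigma>2 + \<epsilon> \<le> (\<Sum>q<s. (Z q \<omega> - \<mu>)^2) / s} \<le> exp (-2 * real s * \<epsilon>^2)"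
      "prob {\<omega>\<in>space M. (\<Sum>q<s. (Z q \<omega> - \<mu>)^2) / s \<le> \<sigma>2 - \<epsilon>} \<le> exp (-2 * real s * \<epsilon>^2)"
    using Hoeffding_unit_interval_ge[OF _ \<open>0 < s\<close> \<open>0 \<le> \<epsilon>\<close>]
      Hoeffding_unit_interval_le[OF _ \<open>0 < s\<close> \<open>0 \<le> \<epsilon>\<close>] var by auto
qed

lemma (in prob_space) emp_var_upper_tail:
  fixes X :: "nat \<Rightarrow> nat \<Rightarrow> 'a \<Rightarrow> real"
  assumes indep: "indep_vars (\<lambda>_. borel) (X i) {..<s}" and "0 < s" "0 \<le> c"
    and bounded: "\<And>q. q < s \<Longrightarrow> AE \<omega> in M. X i q \<omega> \<in> {0..1}"
    and mean: "\<And>q. q < s \<Longrightarrow> expectation (X i q) = \<mu>"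
    and var: "\<And>q. q < s \<Longrightarrow> expectation (\<lambda>\<omega>. (X i q \<omega> - \<mu>)^2) = \<sigma>2"
  shows "prob {\<omega>\<in>space M. \<sigma>2 + c \<le> emp_var (\<lambda>j q. X j q \<omega>) i s} \<le> exp (-2 * real s * c^2)"
proof -
  let ?E = "{\<omega>\<in>space M. \<sigma>2 + c \<le> (\<Sum>q<s. (X i q \<omega> - \<mu>)^2) / s}"
  have "X i q \<in> borel_measurable M" if "q < s" for q
    using indep that unfolding indep_vars_def by auto
  then have [measurable]: "(\<lambda>\<omega>. \<Sum>q<s. (X i q \<omega> - \<mu>)^2) \<in> borel_measurable M"
    by (intro borel_measurable_sum borel_measurable_power borel_measurable_diff measurable_const) auto
  have "{\<omega>\<in>space M. \<sigma>2 + c \<le> emp_var (\<lambda>j q. X j q \<omega>) i s} \<subseteq> ?E"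
    using emp_var_le_shifted[OF \<open>0 < s\<close>, of _ i \<mu>] by (auto intro: order_trans)
  then have "prob {\<omega>\<in>space M. \<sigma>2 + c \<le> emp_var (\<lambda>j q. X j q \<omega>) i s} \<le> prob ?E"
    by (intro finite_measure_mono) measurable
  also have "\<dots> \<le> exp (-2 * real s * c^2)"
    by (rule Hoeffding_squared_deviations_ge[OF indep \<open>0 < s\<close> \<open>0 \<le> c\<close> bounded mean var])
  finally show ?thesis .
qed

lemma (in prob_space) emp_var_lower_tail:
  fixes X :: "nat \<Rightarrow> nat \<Rightarrow> 'a \<Rightarrow> real"
  assumes indep: "indep_vars (\<lambda>_. borel) (X i) {..<s}" and "0 < s" "0 \<le> a" "0 \<le> b"
    and bounded: "\<And>q. q < s \<Longrightarrow> AE \<omega> in M. X i q \<omega> \<in> {0..1}"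
    and mean: "\<And>q. q < s \<Longrightarrow> expectation (X i q) = \<mu>"
    and var: "\<And>q. q < s \<Longrightarrow> expectation (\<lambda>\<omega>. (X i q \<omega> - \<mu>)^2) = \<sigma>2"
  shows "prob {\<omega>\<in>space M. emp_var (\<lambda>j q. X j q \<omega>) i s + (a + b) \<le> \<sigma>2}
           \<le> exp (-2 * real s * a^2) + 2 * exp (-2 * real s * b)"
proof -
  let ?A = "{\<omega>\<in>space M. (\<Sum>q<s. (X i q \<omega> - \<mu>)^2) / s \<le> \<sigma>2 - a}"
  let ?B = "{\<omega>\<in>space M. sqrt b \<le> \<bar>(\<Sum>q<s. X i q \<omega>) / s - \<mu>\<bar>}"
  have "X i q \<in> borel_measurable M" if "q < s" for q
    using indep that unfolding indep_vars_def by auto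
  then have [measurable]: "(\<lambda>\<omega>. \<Sum>q<s. (X i q \<omega> - \<mu>)^2) \<in> borel_measurable M"
      "(\<lambda>\<omega>. \<Sum>q<s. X i q \<omega>) \<in> borel_measurable M"
    by (intro borel_measurable_sum borel_measurable_power borel_measurable_diff measurable_const; auto)+
  have "{\<omega>\<in>space M. emp_var (\<lambda>j q. X j q \<omega>) i s + (a + b) \<le> \<sigma>2} \<subseteq> ?A \<union> ?B"
    using emp_var_undershoot[OF \<open>0 < s\<close>, of _ i a b \<sigma>2 \<mu>] by auto
  then have "prob {\<omega>\<in>space M. emp_var (\<lambda>j q. X j q \<omega>) i s + (a + b) \<le> \<sigma>2} \<le> prob (?A \<union> ?B)"
    by (intro finite_measure_mono) measurable
  also have "\<dots> \<le> prob ?A + prob ?B"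
    by (intro measure_Un_le) measurable
  also have "\<dots> \<le> exp (-2 * real s * a^2) + 2 * exp (-2 * real s * (sqrt b)^2)"
    using Hoeffding_squared_deviations_le[OF indep \<open>0 < s\<close> \<open>0 \<le> a\<close> bounded mean var]
      Hoeffding_unit_interval_abs_ge[OF indep \<open>0 < s\<close> real_sqrt_ge_zero[OF \<open>0 \<le> b\<close>] bounded mean]
    by (rule add_mono)
  finally show ?thesis using \<open>0 \<le> b\<close> by simp
qed

section \<open>Summing the failure probabilities\<close>

lemma exp_vv_radius:
  assumes "1 \<le> t" "0 < s"
  shows "exp (-2 * real s * (vv_radius t s)^2) = 1 / (real t)^4"
proof -
  have "-2 * real s * (vv_radius t s)^2 = - (of_nat 4 * ln (real t))"
    using assms by (simp add: vv_radius_def)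
  then show ?thesis
    using assms(1) by (simp only: exp_minus exp_of_nat_mult) (simp add: inverse_eq_divide)
qed

lemma vv_radius_le_quarter_sample_size:
  assumes "2 \<le> t" "0 < s" "vv_radius t s \<le> 1/4"
  shows "32 * ln (real t) \<le> real s"
proof -
  have "(vv_radius t s)^2 \<le> (1/4)^2"
    using assms(3) vv_radius_nonneg by (simp add: power_mono)
  then have "2 * ln (real t) / real s \<le> 1/16"
    using assms(1) by (simp add: vv_radius_def power2_eq_square)
  then show ?thesis using assms(2) by (simp add: divide_le_eq)
qed

lemma vv_radius_le_quarter_large_time:
  assumes "2 \<le> t" "0 < s" "s \<le> t" "vv_radius t s \<le> 1/4"
  shows "17 \<le> t"
proof -
  have "1/2 < ln (2::real)" by (metis less_numeral_extra(1) ln_add1_gt one_add_one)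
  also have "\<dots> \<le> ln (real t)" using assms(1) by simp
  finally show ?thesis
    using vv_radius_le_quarter_sample_size[OF assms(1,2,4)] assms(3) by linarith
qed

text \<open>The confidence radius \<open>r\<close> is split as \<open>13/16 r + 3/16 r\<close> between the two terms of the
  lower tail bound for the empirical variance. Summed over the \<open>s \<le> t\<close> possible sample sizes,
  both terms are summable in \<open>t\<close>: the first because \<open>4 (13/16)\<^sup>2 > 5/2\<close>, the second because
  \<open>r \<le> 1/4\<close> forces \<open>s \<ge> 32 ln t\<close>.\<close>
lemma vv_lower_tail_rate:
  assumes "2 \<le> t" "0 < s" "vv_radius t s \<le> 1/4"
  shows "exp (-2 * real s * (13/16 * vv_radius t s)^2) + 2 * exp (-2 * real s * (3/16 * vv_radius t s))
           \<le> 1 / (real t * (real t * sqrt (real t))) + 2 / (real t)^3"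
proof -
  define L where "L = ln (real t)"
  define r where "r = vv_radius t s"
  have s: "32 * L \<le> real s" unfolding L_def by (rule vv_radius_le_quarter_sample_size[OF assms])
  have L: "0 < L" using assms(1) by (simp add: L_def)
  then have r2: "real s * r^2 = 2 * L"
    using s by (simp add: r_def L_def vv_radius_def)
  have exp_L: "exp L = real t" using assms(1) by (simp add: L_def)
  have sqrt_t: "sqrt (real t) = exp (L/2)"
    by (rule real_sqrt_unique) (simp_all add: power2_eq_square exp_L flip: exp_add)
  have "-2 * real s * (13/16 * r)^2 = -(169/128) * (real s * r^2)"
    by (simp add: power2_eq_square)
  then have "exp (-2 * real s * (13/16 * r)^2) \<le> exp (-(L + L + L/2))"
    using r2 L by simp
  also have "\<dots> = 1 / (real t * (real t * sqrt (real t)))"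
    by (simp only: exp_minus exp_add) (simp add: exp_L sqrt_t inverse_eq_divide)
  finally have first: "exp (-2 * real s * (13/16 * r)^2) \<le> 1 / (real t * (real t * sqrt (real t)))" .
  have "(8 * L)^2 \<le> real s * (2 * L)"
    using mult_right_mono[OF s, of "2 * L"] L by (simp add: power2_eq_square)
  also have "\<dots> = (real s * r)^2"
    by (simp add: power2_eq_square r2[symmetric])
  finally have "8 * L \<le> real s * r"
    by (rule power2_le_imp_le) (simp add: r_def vv_radius_nonneg)
  then have "exp (-2 * real s * (3/16 * r)) \<le> exp (-(L + L + L))"
    by (simp add: mult.commute)
  also have "\<dots> = 1 / (real t)^3"
    by (simp only: exp_minus exp_add) (simp add: exp_L inverse_eq_divide power3_eq_cube)
  finally show ?thesis using first by (simp add: r_def)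
qed

lemma inverse_cube_le_diff:
  fixes x :: real
  assumes "1 < x"
  shows "1 / x^3 \<le> 1 / (x - 1) - 1 / x"
proof -
  have "x \<le> x * x" using assms by (simp add: mult_le_cancel_left1)
  then have "x - 1 \<le> x * x" by linarith
  then have "(x - 1) * x \<le> x * x * x"
    using assms by (simp add: mult_right_mono)
  then have "1 / x^3 \<le> 1 / ((x - 1) * x)"
    using assms by (intro divide_left_mono) (simp_all add: power3_eq_cube)
  also have "\<dots> = 1 / (x - 1) - 1 / x"
    using assms by (simp add: field_simps)
  finally show ?thesis .
qed

lemma inverse_sqrt_diff_ge:
  fixes x :: real
  assumes "1 < x"
  shows "1 / (2 * x * sqrt x) \<le> 1 / sqrt (x - 1) - 1 / sqrt x"
proof -
  define a b where "a = sqrt (x - 1)" and "b = sqrt x"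
  have ab: "0 < a" "a \<le> b" "b^2 = x" using assms by (auto simp: a_def b_def)
  have "(b - a) * (a + b) = 1"
    using assms by (simp add: a_def b_def algebra_simps flip: power2_eq_square)
  then have "b - a = 1 / (a + b)"
    using ab by (simp add: field_simps)
  moreover have "1 / a - 1 / b = (b - a) / (a * b)"
    using ab by (simp add: field_simps)
  ultimately have "1 / a - 1 / b = 1 / (a * b * (a + b))"
    by simp
  moreover have "a * b * (a + b) \<le> b * b * (b + b)"
    using ab by (intro mult_mono) auto
  then have "1 / (b * b * (b + b)) \<le> 1 / (a * b * (a + b))"
    using ab by (intro divide_left_mono) auto
  ultimately show ?thesis
    using ab by (simp add: a_def b_def power2_eq_square algebra_simps)
qed

lemma inverse_sqrt_diff_bound:
  fixes x :: real
  assumes "1 < x"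
  shows "1 / (x * sqrt x) + 2 / x^2 \<le> 6 * (1 / sqrt (x - 1) - 1 / sqrt x)"
proof -
  have "sqrt x * 1 \<le> sqrt x * sqrt x"
    using assms by (intro mult_left_mono) auto
  then have "sqrt x \<le> x" using assms by simp
  then have "2 / x^2 \<le> 2 / (x * sqrt x)"
    using assms by (intro divide_left_mono) (simp_all add: power2_eq_square)
  then have "1 / (x * sqrt x) + 2 / x^2 \<le> 1 / (x * sqrt x) + 2 / (x * sqrt x)"
    by (rule add_left_mono)
  also have "\<dots> = 6 * (1 / (2 * x * sqrt x))"
    using assms by (simp add: field_simps)
  also have "\<dots> \<le> 6 * (1 / sqrt (x - 1) - 1 / sqrt x)"
    using inverse_sqrt_diff_ge[OF assms] by (rule mult_left_mono) simp
  finally show ?thesis .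
qed

text \<open>The first summand telescopes the upper tail bound \<open>t^-3\<close>, the second the lower tail bound
  \<open>t^-3/2 + 2 t^-2\<close>, which vanishes for \<open>t \<le> 16\<close>.\<close>
definition vv_tail_potential :: "nat \<Rightarrow> real" where
  "vv_tail_potential t = 1 / (real t - 1) + 6 / sqrt (max 16 (real t - 1))"

lemma vv_tail_potential_step:
  assumes "2 \<le> t"
  shows "1 / (real t)^3 + (if 17 \<le> t then 1 / (real t * sqrt (real t)) + 2 / (real t)^2 else 0)
           \<le> vv_tail_potential t - vv_tail_potential (Suc t)"
proof -
  have "(if 17 \<le> t then 1 / (real t * sqrt (real t)) + 2 / (real t)^2 else 0)
      \<le> 6 * (1 / sqrt (max 16 (real t - 1)) - 1 / sqrt (max 16 (real t)))"
  proof (cases "17 \<le> t")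
    case True
    then have "max 16 (real t - 1) = real t - 1" "max 16 (real t) = real t" by auto
    with True show ?thesis using inverse_sqrt_diff_bound[of "real t"] by simp
  next
    case False
    then have "max 16 (real t - 1) = 16" "max 16 (real t) = 16" by auto
    with False show ?thesis by simp
  qed
  moreover have "1 / (real t)^3 \<le> 1 / (real t - 1) - 1 / real t"
    using assms by (intro inverse_cube_le_diff) simp
  ultimately show ?thesis by (simp add: vv_tail_potential_def algebra_simps)
qed

lemma vv_tail_potential_bounds:
  assumes "2 \<le> t"
  shows "0 \<le> vv_tail_potential t" "vv_tail_potential t \<le> 5/2"
proof -
  have "4 \<le> sqrt (max 16 (real t - 1))" by (simp add: real_le_rsqrt)
  then have "6 / sqrt (max 16 (real t - 1)) \<le> 6 / 4" by (intro divide_left_mono) auto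
  moreover have "0 \<le> 1 / (real t - 1)" "1 / (real t - 1) \<le> 1" using assms by simp_all
  ultimately show "0 \<le> vv_tail_potential t" "vv_tail_potential t \<le> 5/2"
    unfolding vv_tail_potential_def by auto
qed

lemma vv_tail_sum_le:
  assumes "2 \<le> K"
  shows "(\<Sum>t\<in>{K..<n}. 1 / (real t)^3 + (if 17 \<le> t then 1 / (real t * sqrt (real t)) + 2 / (real t)^2 else 0))
           \<le> 5/2"
proof (cases "K \<le> n")
  case True
  have "(\<Sum>t\<in>{K..<n}. 1 / (real t)^3 + (if 17 \<le> t then 1 / (real t * sqrt (real t)) + 2 / (real t)^2 else 0))
      \<le> (\<Sum>t\<in>{K..<n}. vv_tail_potential t - vv_tail_potential (Suc t))"
    using assms by (intro sum_mono vv_tail_potential_step) auto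
  also have "\<dots> = vv_tail_potential K - vv_tail_potential n"
    using sum_Suc_diff'[OF True, of "\<lambda>t. - vv_tail_potential t"] by simp
  also have "\<dots> \<le> 5/2"
    using vv_tail_potential_bounds(2)[OF assms] vv_tail_potential_bounds(1)[of n] assms True
    by linarith
  finally show ?thesis .
qed simp

section \<open>Expected pull counts of UCB-VV\<close>

locale bandit = prob_space M for M :: "'a measure" +
  fixes K :: nat and \<nu> :: "nat \<Rightarrow> real measure" and X :: "nat \<Rightarrow> nat \<Rightarrow> 'a \<Rightarrow> real"
  assumes prob_space_arm: "\<And>i. i < K \<Longrightarrow> prob_space (\<nu> i)"
    and arm_unit_interval: "\<And>i. i < K \<Longrightarrow> measure (\<nu> i) {0..1} = 1"
    and indep_rewards: "indep_vars (\<lambda>_. borel) (\<lambda>(i, q). X i q) ({..<K} \<times> UNIV)"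
    and distr_reward: "\<And>i q. i < K \<Longrightarrow> distr M borel (X i q) = \<nu> i"
begin

lemma indep_arm_rewards: "i < K \<Longrightarrow> indep_vars (\<lambda>_. borel) (X i) UNIV"
  using indep_vars_reindex[of "Pair i" UNIV, OF _ indep_vars_subset[OF indep_rewards]]
  by (auto simp: inj_def)

lemma reward_measurable [measurable]: "i < K \<Longrightarrow> X i q \<in> borel_measurable M"
  using indep_arm_rewards unfolding indep_vars_def by auto

lemma reward_unit_interval:
  assumes "i < K" shows "AE \<omega> in M. X i q \<omega> \<in> {0..1}"
proof -
  have "AE z in \<nu> i. z \<in> {0..1}"
    using assms by (intro prob_space.AE_prob_1 prob_space_arm arm_unit_interval)
  then have "AE z in distr M borel (X i q). z \<in> {0..1}"
    by (simp only: distr_reward[OF assms])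
  then show ?thesis
    using assms by (subst (asm) AE_distr_iff) auto
qed

lemma integral_arm:
  fixes g :: "real \<Rightarrow> real"
  assumes "i < K" "g \<in> borel_measurable borel"
  shows "(\<integral>z. g z \<partial>\<nu> i) = (\<integral>\<omega>. g (X i q \<omega>) \<partial>M)"
  using integral_distr[OF reward_measurable[OF assms(1)] assms(2)] by (simp add: distr_reward assms)

lemma expectation_reward: "i < K \<Longrightarrow> expectation (X i q) = (\<integral>z. z \<partial>\<nu> i)"
  using integral_arm[of i "\<lambda>z. z"] by simp

lemma central_moment_reward:
  "i < K \<Longrightarrow> expectation (\<lambda>\<omega>. (X i q \<omega> - (\<integral>z. z \<partial>\<nu> i))^2) = dist_var (\<nu> i)"
  using integral_arm[of i "\<lambda>z. (z - (\<integral>z. z \<partial>\<nu> i))^2" q] by (simp add: dist_var_def)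

lemma dist_var_le_quarter: "i < K \<Longrightarrow> dist_var (\<nu> i) \<le> 1/4"
  using variance_le_quarter[OF reward_measurable reward_unit_interval, of i 0]
  by (simp add: expectation_reward central_moment_reward)

lemma emp_var_measurable [measurable]:
  "i < K \<Longrightarrow> (\<lambda>\<omega>. emp_var (\<lambda>j q. X j q \<omega>) i s) \<in> borel_measurable M"
  unfolding emp_var_def emp_mean_def by measurable

lemma upper_deviation_prob:
  assumes "i < K" "1 \<le> t" "0 < s"
  shows "prob {\<omega>\<in>space M. dist_var (\<nu> i) + vv_radius t s \<le> emp_var (\<lambda>j q. X j q \<omega>) i s}
           \<le> 1 / (real t)^4"
proof -
  have "prob {\<omega>\<in>space M. dist_var (\<nu> i) + vv_radius t s \<le> emp_var (\<lambda>j q. X j q \<omega>) i s}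
      \<le> exp (-2 * real s * (vv_radius t s)^2)"
    using assms
    by (intro emp_var_upper_tail[where \<mu>="\<integral>z. z \<partial>\<nu> i"] indep_vars_subset[OF indep_arm_rewards])
       (simp_all add: vv_radius_nonneg reward_unit_interval[simplified] expectation_reward
         central_moment_reward)
  then show ?thesis using exp_vv_radius[OF assms(2,3)] by simp
qed

lemma lower_deviation_prob:
  assumes "j < K" "2 \<le> t" "0 < s" "s \<le> t"
  shows "prob {\<omega>\<in>space M. emp_var (\<lambda>j q. X j q \<omega>) j s + vv_radius t s \<le> dist_var (\<nu> j)}
           \<le> (if 17 \<le> t then 1 / (real t * (real t * sqrt (real t))) + 2 / (real t)^3 else 0)"
proof (cases "vv_radius t s \<le> dist_var (\<nu> j)")
  case True
  let ?r = "vv_radius t s"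
  have r: "?r \<le> 1/4" using True dist_var_le_quarter[OF assms(1)] by simp
  have "prob {\<omega>\<in>space M. emp_var (\<lambda>j q. X j q \<omega>) j s + (13/16 * ?r + 3/16 * ?r) \<le> dist_var (\<nu> j)}
      \<le> exp (-2 * real s * (13/16 * ?r)^2) + 2 * exp (-2 * real s * (3/16 * ?r))"
    using assms
    by (intro emp_var_lower_tail[where \<mu>="\<integral>z. z \<partial>\<nu> j"] indep_vars_subset[OF indep_arm_rewards])
       (simp_all add: vv_radius_nonneg reward_unit_interval[simplified] expectation_reward
         central_moment_reward)
  moreover have "13/16 * ?r + 3/16 * ?r = ?r" by simp
  ultimately show ?thesis
    using vv_lower_tail_rate[OF assms(2,3) r] vv_radius_le_quarter_large_time[OF assms(2-4) r] by simp
next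
  case False
  then have "{\<omega>\<in>space M. emp_var (\<lambda>j q. X j q \<omega>) j s + vv_radius t s \<le> dist_var (\<nu> j)} = {}"
    using emp_var_nonneg by (auto simp: not_le intro: less_le_trans)
  then have "prob {\<omega>\<in>space M. emp_var (\<lambda>j q. X j q \<omega>) j s + vv_radius t s \<le> dist_var (\<nu> j)} = 0"
    by (simp only: measure_empty)
  then show ?thesis by simp
qed

lemma deviation_probs_le:
  assumes "i < K" "j < K" "2 \<le> t"
  shows "(\<Sum>s\<in>{1..t}. prob {\<omega>\<in>space M. dist_var (\<nu> i) + vv_radius t s \<le> emp_var (\<lambda>j q. X j q \<omega>) i s}
                  + prob {\<omega>\<in>space M. emp_var (\<lambda>j q. X j q \<omega>) j s + vv_radius t s \<le> dist_var (\<nu> j)})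
           \<le> 1 / (real t)^3 + (if 17 \<le> t then 1 / (real t * sqrt (real t)) + 2 / (real t)^2 else 0)"
proof -
  let ?p = "1 / (real t)^4 + (if 17 \<le> t then 1 / (real t * (real t * sqrt (real t))) + 2 / (real t)^3 else 0)"
  have "(\<Sum>s\<in>{1..t}. prob {\<omega>\<in>space M. dist_var (\<nu> i) + vv_radius t s \<le> emp_var (\<lambda>j q. X j q \<omega>) i s}
                  + prob {\<omega>\<in>space M. emp_var (\<lambda>j q. X j q \<omega>) j s + vv_radius t s \<le> dist_var (\<nu> j)})
      \<le> (\<Sum>s\<in>{1..t}. ?p)"
    using assms by (intro sum_mono add_mono upper_deviation_prob lower_deviation_prob) auto
  also have "\<dots> = 1 / (real t)^3 + (if 17 \<le> t then 1 / (real t * sqrt (real t)) + 2 / (real t)^2 else 0)"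
    using assms(3) by (simp add: field_simps power2_eq_square power3_eq_cube eval_nat_numeral)
  finally show ?thesis .
qed

lemma expectation_vv_counts_le_deviation_probs:
  fixes l :: nat
  assumes tb: "\<And>t S. S \<noteq> {} \<Longrightarrow> tb t S \<in> S" and "0 < K" "i < K" "j < K"
    and gap: "dist_var (\<nu> i) < dist_var (\<nu> j)"
    and l: "1 \<le> l" "8 * ln (real n) / (dist_var (\<nu> j) - dist_var (\<nu> i))^2 \<le> l"
  shows "expectation (\<lambda>\<omega>. real (vv_counts K tb (\<lambda>j q. X j q \<omega>) n i))
           \<le> real l + (\<Sum>t\<in>{K..<n}. \<Sum>s\<in>{1..t}.
                prob {\<omega>\<in>space M. dist_var (\<nu> i) + vv_radius t s \<le> emp_var (\<lambda>j q. X j q \<omega>) i s}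
              + prob {\<omega>\<in>space M. emp_var (\<lambda>j q. X j q \<omega>) j s + vv_radius t s \<le> dist_var (\<nu> j)})"
proof -
  define A where "A t s = {\<omega>\<in>space M. dist_var (\<nu> i) + vv_radius t s \<le> emp_var (\<lambda>j q. X j q \<omega>) i s}"
    for t s
  define B where "B t s = {\<omega>\<in>space M. emp_var (\<lambda>j q. X j q \<omega>) j s + vv_radius t s \<le> dist_var (\<nu> j)}"
    for t s
  define G where "G \<omega> = real l + (\<Sum>t\<in>{K..<n}. \<Sum>s\<in>{1..t}. indicator (A t s) \<omega> + indicator (B t s) \<omega>)"
    for \<omega>
  have events: "A t s \<in> events" "B t s \<in> events" for t s
    unfolding A_def B_def using \<open>i < K\<close> \<open>j < K\<close> by measurable
  then have indicators: "integrable M (indicator (A t s) :: 'a \<Rightarrow> real)"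
    "integrable M (indicator (B t s) :: 'a \<Rightarrow> real)" for t s
    by (simp_all add: less_top[symmetric])
  have "A t s \<inter> space M = A t s" "B t s \<inter> space M = B t s" for t s
    by (auto simp: A_def B_def)
  with indicators have G: "integrable M G"
    "integral\<^sup>L M G = real l + (\<Sum>t\<in>{K..<n}. \<Sum>s\<in>{1..t}. prob (A t s) + prob (B t s))"
    unfolding G_def by (simp_all add: prob_space integral_sum Bochner_Integration.integral_add)
  have counts_le_G: "real (vv_counts K tb (\<lambda>j q. X j q \<omega>) n i) \<le> G \<omega>" if "\<omega> \<in> space M" for \<omega>
    using vv_counts_le_deviations[where x="\<lambda>j q. X j q \<omega>", OF tb \<open>0 < K\<close> \<open>j < K\<close> gap l] that
    by (simp add: G_def A_def B_def indicator_def)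
  have "expectation (\<lambda>\<omega>. real (vv_counts K tb (\<lambda>j q. X j q \<omega>) n i)) \<le> integral\<^sup>L M G"
  proof (cases "integrable M (\<lambda>\<omega>. real (vv_counts K tb (\<lambda>j q. X j q \<omega>) n i))")
    case True
    then show ?thesis using G(1) counts_le_G by (rule integral_mono)
  next
    case False
    \<comment> \<open>The counts need not be measurable, as the tie-breaking rule is arbitrary;
      their integral is then \<open>0\<close>.\<close>
    have "0 \<le> integral\<^sup>L M G"
      by (intro Bochner_Integration.integral_nonneg) (use counts_le_G in \<open>metis of_nat_0_le_iff order_trans\<close>)
    then show ?thesis using False by (simp add: not_integrable_integral_eq)
  qed
  then show ?thesis by (simp add: G(2) A_def B_def)
qed

lemma expectation_vv_counts_le:
  assumes tb: "\<And>t S. S \<noteq> {} \<Longrightarrow> tb t S \<in> S" and "2 \<le> K" "i < K" "j < K"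
    and gap: "dist_var (\<nu> i) < dist_var (\<nu> j)"
  shows "expectation (\<lambda>\<omega>. real (vv_counts K tb (\<lambda>j q. X j q \<omega>) n i))
           \<le> 8 * ln (real n) / (dist_var (\<nu> j) - dist_var (\<nu> i))^2 + 7/2"
proof -
  define b where "b = 8 * ln (real n) / (dist_var (\<nu> j) - dist_var (\<nu> i))^2"
  define l where "l = max 1 (nat \<lceil>b\<rceil>)"
  have "0 \<le> b" by (cases n) (simp_all add: b_def)
  then have l: "1 \<le> l" "b \<le> real l" "real l \<le> b + 1"
    using of_int_ceiling_le_add_one[of b] by (auto simp: l_def of_nat_max intro: max.coboundedI2)
  have "expectation (\<lambda>\<omega>. real (vv_counts K tb (\<lambda>j q. X j q \<omega>) n i))
      \<le> real l + (\<Sum>t\<in>{K..<n}. \<Sum>s\<in>{1..t}.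
           prob {\<omega>\<in>space M. dist_var (\<nu> i) + vv_radius t s \<le> emp_var (\<lambda>j q. X j q \<omega>) i s}
         + prob {\<omega>\<in>space M. emp_var (\<lambda>j q. X j q \<omega>) j s + vv_radius t s \<le> dist_var (\<nu> j)})"
    using assms l(1,2) by (intro expectation_vv_counts_le_deviation_probs) (simp_all add: b_def)
  also have "\<dots> \<le> real l + (\<Sum>t\<in>{K..<n}.
      1 / (real t)^3 + (if 17 \<le> t then 1 / (real t * sqrt (real t)) + 2 / (real t)^2 else 0))"
    using assms by (intro add_left_mono sum_mono deviation_probs_le) auto
  also have "\<dots> \<le> real l + 5/2"
    using vv_tail_sum_le[OF \<open>2 \<le> K\<close>] by simp
  finally show ?thesis using l(3) by (simp add: b_def)
qed

lemma vv_regret_term_le: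
  assumes tb: "\<And>t S. S \<noteq> {} \<Longrightarrow> tb t S \<in> S" and "2 \<le> K" "i < K" "j < K"
    and gap: "dist_var (\<nu> i) < dist_var (\<nu> j)"
  shows "expectation (\<lambda>\<omega>. real (vv_counts K tb (\<lambda>j q. X j q \<omega>) n i)) * (dist_var (\<nu> j) - dist_var (\<nu> i))
           \<le> 8 * (ln (real n) / (dist_var (\<nu> j) - dist_var (\<nu> i)))
             + (1 + pi^2 / 3) * (dist_var (\<nu> j) - dist_var (\<nu> i))"
proof -
  define \<delta> where "\<delta> = dist_var (\<nu> j) - dist_var (\<nu> i)"
  have "0 < \<delta>" using gap by (simp add: \<delta>_def)
  have "7/2 \<le> 1 + pi^2 / 3"
    using mult_mono[OF pi_gt3[THEN less_imp_le] pi_gt3[THEN less_imp_le]] by (simp add: power2_eq_square)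
  have "expectation (\<lambda>\<omega>. real (vv_counts K tb (\<lambda>j q. X j q \<omega>) n i)) * \<delta>
      \<le> (8 * ln (real n) / \<delta>^2 + 7/2) * \<delta>"
    using expectation_vv_counts_le[OF assms] \<open>0 < \<delta>\<close> by (intro mult_right_mono) (simp_all add: \<delta>_def)
  also have "\<dots> = 8 * (ln (real n) / \<delta>) + 7/2 * \<delta>"
    using \<open>0 < \<delta>\<close> by (simp add: field_simps power2_eq_square)
  also have "\<dots> \<le> 8 * (ln (real n) / \<delta>) + (1 + pi^2 / 3) * \<delta>"
    using \<open>0 < \<delta>\<close> \<open>7/2 \<le> 1 + pi^2 / 3\<close> by (intro add_left_mono mult_right_mono) auto
  finally show ?thesis by (simp add: \<delta>_def)
qed

end

theorem theorem1:
  fixes M :: "'a measure" and K n :: nat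
    and \<nu> :: "nat \<Rightarrow> real measure"
    and X :: "nat \<Rightarrow> nat \<Rightarrow> 'a \<Rightarrow> real"
    and tb :: "nat \<Rightarrow> nat set \<Rightarrow> nat"
  assumes "prob_space M"
    and "K \<ge> 2"
    and "\<And>i. i < K \<Longrightarrow> prob_space (\<nu> i)"
    and "\<And>i. i < K \<Longrightarrow> sets (\<nu> i) = sets borel"
    and "\<And>i. i < K \<Longrightarrow> measure (\<nu> i) {0..1} = 1"
    and "prob_space.indep_vars M (\<lambda>_. borel) (\<lambda>(i, q). X i q) ({..<K} \<times> UNIV)"
    and "\<And>i q. i < K \<Longrightarrow> distr M borel (X i q) = \<nu> i"
    and "\<And>t S. S \<noteq> {} \<Longrightarrow> tb t S \<in> S"
    and "\<exists>i<K. \<forall>j<K. j \<noteq> i \<longrightarrow> dist_var (\<nu> j) < dist_var (\<nu> i)"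
  shows "(let \<sigma>s = Max ((\<lambda>i. dist_var (\<nu> i)) ` {..<K});
             \<delta> = (\<lambda>i. \<sigma>s - dist_var (\<nu> i));
             subopt = {i. i < K \<and> dist_var (\<nu> i) < \<sigma>s}
         in (\<Sum>i<K. (\<integral>\<omega>. real (vv_counts K tb (\<lambda>j q. X j q \<omega>) n i) \<partial>M) * \<delta> i)
            \<le> 8 * (\<Sum>i\<in>subopt. ln (real n) / \<delta> i) + (1 + pi^2 / 3) * (\<Sum>i\<in>subopt. \<delta> i))"
proof -
  interpret bandit M K \<nu> X
    using assms(1,3,5-7) by (simp add: bandit_def bandit_axioms_def)
  define \<sigma>s where "\<sigma>s = Max ((\<lambda>i. dist_var (\<nu> i)) ` {..<K})"
  define E where "E i = expectation (\<lambda>\<omega>. real (vv_counts K tb (\<lambda>j q. X j q \<omega>) n i))" for i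
  let ?subopt = "{i. i < K \<and> dist_var (\<nu> i) < \<sigma>s}"
  have "\<sigma>s \<in> (\<lambda>i. dist_var (\<nu> i)) ` {..<K}"
    unfolding \<sigma>s_def using assms(2) by (intro Max_in) (auto simp: lessThan_empty_iff)
  then obtain opt where opt: "opt < K" "dist_var (\<nu> opt) = \<sigma>s" by auto
  have "dist_var (\<nu> i) \<le> \<sigma>s" if "i < K" for i
    using that by (simp add: \<sigma>s_def)
  then have "(\<Sum>i<K. E i * (\<sigma>s - dist_var (\<nu> i))) = (\<Sum>i\<in>?subopt. E i * (\<sigma>s - dist_var (\<nu> i)))"
    by (intro sum.mono_neutral_right) (auto simp: not_less intro: antisym)
  also have "\<dots> \<le> (\<Sum>i\<in>?subopt. 8 * (ln (real n) / (\<sigma>s - dist_var (\<nu> i)))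
                                 + (1 + pi^2 / 3) * (\<sigma>s - dist_var (\<nu> i)))"
    using vv_regret_term_le[OF assms(8,2) _ opt(1)] opt(2) by (intro sum_mono) (auto simp: E_def)
  finally show ?thesis
    by (simp add: Let_def E_def \<sigma>s_def sum.distrib sum_distrib_left)
qed

end
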